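(* Let $T>0$, $0<\eta<T$ and $0<\alpha<\frac{1}{\eta}$. If $y\in C([0,T],[0,\infty))$, then the unique solution $u$ of the problem \[ u''(t)+y(t)=0,\quad t\in(0,T),\qquad u'(0)=0,\quad u(T)=\alpha\int_0^{\eta}u(s)\,ds \] satisfies $u(t)\ge 0$ for all $t\in[0,T]$. *)

theory Defs
  imports "HOL-Analysis.Analysis"
begin

end

theory Submission
  imports Defs
begin

text \<open>Since \<open>u'' = -y \<le> 0\<close> and \<open>u'(0) = 0\<close>, the derivative \<open>u'\<close> is nonpositive, so \<open>u\<close> is
  nonincreasing and \<open>u \<ge> u(T)\<close> on \<open>[0, T]\<close>. Monotonicity also gives \<open>\<integral>\<^sub>0\<^sup>\<eta> u \<ge> \<eta> u(\<eta>) \<ge> \<eta> u(T)\<close>,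
  so with \<open>c = \<alpha>\<eta> \<in> (0, 1)\<close> the boundary condition yields \<open>c u(T) \<le> c u(\<eta>) \<le> u(T)\<close>,
  i.e. \<open>(1 - c) u(T) \<ge> 0\<close>.\<close>

lemma antitone_on_Icc_if_deriv_nonpos:
  fixes f f' :: "real \<Rightarrow> real"
  assumes "continuous_on {a..b} f"
    and "\<And>x. x \<in> {a<..<b} \<Longrightarrow> (f has_real_derivative f' x) (at x)"
    and "\<And>x. x \<in> {a<..<b} \<Longrightarrow> f' x \<le> 0"
    and "a \<le> s" "s \<le> t" "t \<le> b"
  shows "f t \<le> f s"
proof -
  have "continuous_on {s..t} f"
    using assms(1) by (rule continuous_on_subset) (use assms(4,6) in auto)
  moreover have "\<exists>y. (f has_real_derivative y) (at x) \<and> y \<le> 0" if "s < x" "x < t" for x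
    using that assms(2-4,6) by (intro exI[of _ "f' x"]) auto
  ultimately show ?thesis
    using DERIV_nonpos_imp_decreasing_open[OF assms(5)] by blast
qed

text \<open>Only the one-sided derivative at \<open>a\<close> is used: \<open>f'\<close> need not be continuous there.\<close>

lemma has_real_derivative_left_endpoint_ge:
  fixes f f' :: "real \<Rightarrow> real"
  assumes "a < b"
    and "(f has_real_derivative D) (at a within {a..b})"
    and "\<And>x. x \<in> {a<..<b} \<Longrightarrow> (f has_real_derivative f' x) (at x)"
    and "\<And>x. x \<in> {a<..<b} \<Longrightarrow> c \<le> f' x"
  shows "c \<le> D"
proof (rule tendsto_lowerbound)
  show "((\<lambda>x. (f x - f a) / (x - a)) \<longlongrightarrow> D) (at a within {a..b})"
    using assms(2) by (simp add: has_field_derivative_iff)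
  show "at a within {a..b} \<noteq> bot"
    using assms(1) by (simp add: at_within_Icc_at_right)
  have quotient_ge: "c \<le> (f x - f a) / (x - a)" if x: "x \<in> {a<..<b}" for x
  proof -
    have "continuous (at t within {a..x}) f" if "t \<in> {a..x}" for t
    proof (cases "t = a")
      case True
      have "{a..x} \<subseteq> {a..b}" using x by auto
      then show ?thesis
        using True DERIV_continuous[OF has_field_derivative_subset[OF assms(2)]] by blast
    next
      case False
      then have "t \<in> {a<..<b}" using x that by auto
      then show ?thesis
        using DERIV_isCont[OF assms(3)] continuous_at_imp_continuous_within by blast
    qed
    then have "continuous_on {a..x} (\<lambda>t. f t - c * t)"
      by (intro continuous_intros) (simp add: continuous_on_eq_continuous_within)
    moreover have "\<exists>d. ((\<lambda>t. f t - c * t) has_real_derivative d) (at t) \<and> d \<ge> 0"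
      if "a < t" "t < x" for t
    proof (intro exI conjI)
      have t: "t \<in> {a<..<b}" using that x by auto
      show "((\<lambda>t. f t - c * t) has_real_derivative f' t - c) (at t)"
        using assms(3)[OF t] by (auto intro!: derivative_eq_intros)
      show "0 \<le> f' t - c" using assms(4)[OF t] by simp
    qed
    ultimately have "f a - c * a \<le> f x - c * x"
      using x DERIV_nonneg_imp_increasing_open[of a x "\<lambda>t. f t - c * t"] by simp
    then show ?thesis
      using x by (simp add: field_simps)
  qed
  have "\<forall>\<^sub>F x in at a within {a..b}. x \<in> {a<..<b}"
    unfolding eventually_at using assms(1)
    by (intro exI[of _ "b - a"]) (auto simp: dist_real_def)
  then show "\<forall>\<^sub>F x in at a within {a..b}. c \<le> (f x - f a) / (x - a)"
    by (rule eventually_mono) (rule quotient_ge)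
qed

lemma deriv_le_left_endpoint_if_second_deriv_nonpos:
  fixes f f' g :: "real \<Rightarrow> real"
  assumes "\<And>x. x \<in> {a..b} \<Longrightarrow> (f has_real_derivative f' x) (at x within {a..b})"
    and "\<And>x. x \<in> {a<..<b} \<Longrightarrow> (f' has_real_derivative g x) (at x)"
    and "\<And>x. x \<in> {a<..<b} \<Longrightarrow> g x \<le> 0"
    and t: "t \<in> {a<..<b}"
  shows "f' t \<le> f' a"
proof -
  have deriv_a: "(f has_real_derivative f' a) (at a within {a..t})"
    using t assms(1)[of a] by (auto intro: has_field_derivative_subset)
  have deriv_interior: "(f has_real_derivative f' x) (at x)" if "x \<in> {a<..<t}" for x
    using that t assms(1)[of x] at_within_Icc_at[of a x b] by auto
  have f'_ge: "f' t \<le> f' x" if x: "x \<in> {a<..<t}" for x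
  proof (rule antitone_on_Icc_if_deriv_nonpos[of x t f' g])
    have "isCont f' z" if "z \<in> {x..t}" for z
      using that x t assms(2)[of z] DERIV_isCont by auto
    then show "continuous_on {x..t} f'"
      by (simp add: continuous_at_imp_continuous_on)
  qed (use x t assms(2,3) in auto)
  show ?thesis
    by (rule has_real_derivative_left_endpoint_ge[OF _ deriv_a deriv_interior f'_ge]) (use t in simp)
qed

lemma antitone_on_Icc_if_second_deriv_nonpos:
  fixes f f' g :: "real \<Rightarrow> real"
  assumes "\<And>x. x \<in> {a..b} \<Longrightarrow> (f has_real_derivative f' x) (at x within {a..b})"
    and "\<And>x. x \<in> {a<..<b} \<Longrightarrow> (f' has_real_derivative g x) (at x)"
    and "\<And>x. x \<in> {a<..<b} \<Longrightarrow> g x \<le> 0"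
    and "f' a \<le> 0"
    and "a \<le> s" "s \<le> t" "t \<le> b"
  shows "f t \<le> f s"
proof (rule antitone_on_Icc_if_deriv_nonpos[of a b f f'])
  show "continuous_on {a..b} f"
    using assms(1) DERIV_continuous continuous_on_eq_continuous_within by blast
  show "(f has_real_derivative f' x) (at x)" if "x \<in> {a<..<b}" for x
    using that assms(1)[of x] at_within_Icc_at[of a x b] by auto
  show "f' x \<le> 0" if "x \<in> {a<..<b}" for x
    using deriv_le_left_endpoint_if_second_deriv_nonpos[OF assms(1-3) that] assms(4) by simp
qed (use assms(5-7) in auto)

theorem lemma2p2:
  fixes T \<eta> \<alpha> :: real and y u u' :: "real \<Rightarrow> real"
  assumes "T > 0" and "0 < \<eta>" and "\<eta> < T" and "0 < \<alpha>" and "\<alpha> < 1 / \<eta>"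
    and "continuous_on {0..T} y" and "\<forall>t\<in>{0..T}. y t \<ge> 0"
    and "\<forall>t\<in>{0..T}. (u has_real_derivative u' t) (at t within {0..T})"
    and "\<forall>t\<in>{0<..<T}. (u' has_real_derivative (- y t)) (at t)"
    and "u' 0 = 0"
    and "u T = \<alpha> * integral {0..\<eta>} u"
  shows "\<forall>t\<in>{0..T}. u t \<ge> 0"
proof -
  have u_antitone: "u t \<le> u s" if "0 \<le> s" "s \<le> t" "t \<le> T" for s t
    by (rule antitone_on_Icc_if_second_deriv_nonpos[of 0 T u u' "\<lambda>x. - y x"])
      (use that assms(7-10) in auto)
  have "continuous_on {0..T} u"
    using assms(8) DERIV_continuous continuous_on_eq_continuous_within by blast
  then have "continuous_on {0..\<eta>} u"
    by (rule continuous_on_subset) (use assms(3) in auto)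
  then have "integral {0..\<eta>} (\<lambda>_. u \<eta>) \<le> integral {0..\<eta>} u"
    by (intro integral_le integrable_continuous_real) (use u_antitone assms(2,3) in auto)
  then have "\<alpha> * \<eta> * u \<eta> \<le> u T"
    using assms(2,4,11) by (simp add: mult.assoc mult_left_mono)
  moreover have "\<alpha> * \<eta> * u T \<le> \<alpha> * \<eta> * u \<eta>"
    using assms(2-4) u_antitone[of \<eta> T] by (simp add: mult_left_mono)
  ultimately have "0 \<le> (1 - \<alpha> * \<eta>) * u T"
    by (simp add: algebra_simps)
  moreover have "\<alpha> * \<eta> < 1"
    using assms(2,5) by (simp add: field_simps)
  ultimately have uT_nonneg: "0 \<le> u T"
    by (simp add: zero_le_mult_iff)
  show ?thesis
  proof
    fix t assume "t \<in> {0..T}"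
    then have "u T \<le> u t" by (intro u_antitone) auto
    with uT_nonneg show "0 \<le> u t" by linarith
  qed
qed

end
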